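(* Let $\mathcal F_{\mathbb I}$ be the set of structure functions of the weakly flattened unit interval $\mathbb I$. Then $$\mathcal F_{\mathbb I}=\Big\{f\in\mathcal F_I \;:\; \lim_{t\to0^+}\tfrac{d^n}{dt^n}f(t)=0 \text{ and } \lim_{t\to1^-}\tfrac{d^n}{dt^n}f(t)=0 \text{ for all } n\ge1\Big\}.$$ That is, the generating set of $\mathbb I$ is already the full set of its structure functions, and every structure function on $\mathbb I$ has all derivatives of order $\ge1$ tending to $0$ at both endpoints.
   Context: A Frölicher space is a triple $(X,\mathcal C_X,\mathcal F_X)$ with $\mathcal C_X\subseteq X^{\mathbb R}$ and $\mathcal F_X\subseteq\mathbb R^X$ such that $\mathcal F_X=\{f:X\to\mathbb R\mid f\circ c\in C^\infty(\mathbb R,\mathbb R)\ \forall c\in\mathcal C_X\}$ and $\mathcal C_X=\{c:\mathbb R\to X\mid f\circ c\in C^\infty(\mathbb R,\mathbb R)\ \forall f\in\mathcal F_X\}$. Elements of $\mathcal C_X$ are called structure curves and elements of $\mathcal F_X$ structure functions. The structure generated by a set $F_0\subseteq\mathbb R^X$ has $\mathcal C_X=\{c\mid f\circ c\in C^\infty\ \forall f\in F_0\}$ and $\mathcal F_X=\{f\mid f\circ c\in C^\infty\ \forall c\in\mathcal C_X\}$. The space $I$ is $[0,1]$ with the subspace structure from $\mathbb R$: its structure curves are the maps $\mathbb R\to[0,1]$ that are $C^\infty$ as real-valued functions, and $\mathcal F_I$ is the corresponding set of structure functions. The weakly flattened unit interval $\mathbb I$ is the set $[0,1]$ with the structure generated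 by $F=\{f\in\mathcal F_I\mid \lim_{t\to0^+}f^{(n)}(t)=0=\lim_{t\to1^-}f^{(n)}(t)\ \forall n\ge1\}$. *)

theory Defs
  imports "HOL-Analysis.Analysis"
begin

definition smooth_fun :: "(real \<Rightarrow> real) \<Rightarrow> bool" where
  "smooth_fun g \<longleftrightarrow> (\<forall>n x. (deriv ^^ n) g differentiable (at x))"

text \<open>Maps X \<rightarrow> real are represented by
  functions real \<Rightarrow> real (values outside X are irrelevant for all notions below),
  curves R \<rightarrow> X by functions real \<Rightarrow> real with range in X.\<close>

definition frol_curves :: "real set \<Rightarrow> (real \<Rightarrow> real) set \<Rightarrow> (real \<Rightarrow> real) set" where
  "frol_curves X F0 = {c. range c \<subseteq> X \<and> (\<forall>f\<in>F0. smooth_fun (f \<circ> c))}"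

definition frol_funs :: "(real \<Rightarrow> real) set \<Rightarrow> (real \<Rightarrow> real) set" where
  "frol_funs C = {f. \<forall>c\<in>C. smooth_fun (f \<circ> c)}"

definition curves_I :: "(real \<Rightarrow> real) set" where
  "curves_I = {c. smooth_fun c \<and> range c \<subseteq> {0..1}}"

definition funs_I :: "(real \<Rightarrow> real) set" where
  "funs_I = frol_funs curves_I"

definition flat_gen :: "(real \<Rightarrow> real) set" where
  "flat_gen = {f \<in> funs_I. \<forall>n\<ge>1.
      ((deriv ^^ n) f \<longlongrightarrow> 0) (at_right 0) \<and> ((deriv ^^ n) f \<longlongrightarrow> 0) (at_left 1)}"

definition curves_flatI :: "(real \<Rightarrow> real) set" where
  "curves_flatI = frol_curves {0..1} flat_gen"

definition funs_flatI :: "(real \<Rightarrow> real) set" where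
  "funs_flatI = frol_funs curves_flatI"

end

theory Submission
  imports Defs "HOL-Complex_Analysis.Cauchy_Integral_Formula"
begin

(* One inclusion holds for any generated Frolicher structure.  For the other, let f be
   a structure function.  Every structure curve of I is a structure curve of the flattened
   interval, so f is a structure function of I.  The key observation is that the clipping map
   clip(s) = max 0 (min 1 s) is a structure curve of the flattened interval: for g in flat_gen,
   g o clip is constant outside [0,1], agrees with g on (0,1), and all derivatives of g of order
   >= 1 vanish at the endpoints; derivatives of g o clip at 0 and 1 are then obtained from the
   limits of the neighbouring derivatives (l'Hopital).  Hence f o clip is smooth, and continuity
   of its derivatives at 0 and 1 forces the derivatives of f to tend to 0 there. *)

section \<open>Finite-order differentiability on a set\<close>

text \<open>\<open>Ck_on n U f\<close>: the derivatives of f up to order n are differentiable at every point of U,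
  i.e. f is (n+1)-times differentiable on U.\<close>
definition Ck_on :: "nat \<Rightarrow> real set \<Rightarrow> (real \<Rightarrow> real) \<Rightarrow> bool" where
  "Ck_on n U f \<longleftrightarrow> (\<forall>i\<le>n. \<forall>x\<in>U. (deriv ^^ i) f differentiable (at x))"

lemma smooth_fun_iff_Ck_on: "smooth_fun g \<longleftrightarrow> (\<forall>n. Ck_on n UNIV g)"
  by (auto simp: smooth_fun_def Ck_on_def)

lemma Ck_on_Suc:
  "Ck_on (Suc n) U f \<longleftrightarrow> (\<forall>x\<in>U. f differentiable (at x)) \<and> Ck_on n U (deriv f)"
proof -
  have shift: "(deriv ^^ Suc i) f = (deriv ^^ i) (deriv f)" for i
    by (simp only: funpow_Suc_right o_def)
  have split: "(\<forall>i\<le>Suc n. P i) \<longleftrightarrow> P 0 \<and> (\<forall>i\<le>n. P (Suc i))" for P :: "nat \<Rightarrow> bool"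
    by (metis Suc_le_mono le0 not0_implies_Suc)
  show ?thesis
    unfolding Ck_on_def by (simp only: split shift funpow_0)
qed

lemma Ck_on_0: "Ck_on 0 U f \<longleftrightarrow> (\<forall>x\<in>U. f differentiable (at x))"
  by (simp add: Ck_on_def)

lemma Ck_on_mono: "m \<le> n \<Longrightarrow> Ck_on n U f \<Longrightarrow> Ck_on m U f"
  by (auto simp: Ck_on_def)

lemma Ck_on_subset: "V \<subseteq> U \<Longrightarrow> Ck_on n U f \<Longrightarrow> Ck_on n V f"
  by (auto simp: Ck_on_def)

lemma higher_deriv_differentiable_cong:
  fixes f g :: "real \<Rightarrow> real"
  assumes eq: "eventually (\<lambda>y. f y = g y) (nhds x)"
    and diff: "(deriv ^^ n) f differentiable (at x)"
  shows "(deriv ^^ n) g differentiable (at x)"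
proof -
  have "eventually (\<lambda>y. eventually (\<lambda>z. f z = g z) (nhds y)) (nhds x)"
    using eq by (simp add: eventually_eventually)
  then have "eventually (\<lambda>y. (deriv ^^ n) f y = (deriv ^^ n) g y) (nhds x)"
    by eventually_elim (rule higher_deriv_cong_ev, simp_all)
  then have "((deriv ^^ n) f has_real_derivative D) (at x) \<longleftrightarrow>
      ((deriv ^^ n) g has_real_derivative D) (at x)" for D
    by (rule DERIV_cong_ev[OF refl _ refl])
  then show ?thesis
    using diff by (simp add: real_differentiable_def)
qed

lemma Ck_on_cong:
  assumes "open U" "\<And>x. x \<in> U \<Longrightarrow> f x = g x" "Ck_on n U f"
  shows "Ck_on n U g"
  unfolding Ck_on_def
proof (intro allI impI ballI)
  fix i x assume "i \<le> n" and x: "x \<in> U"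
  then have "(deriv ^^ i) f differentiable (at x)" using assms(3) by (simp add: Ck_on_def)
  moreover have "eventually (\<lambda>y. f y = g y) (nhds x)"
    using eventually_nhds_in_open[OF assms(1) x] by (rule eventually_mono) (rule assms(2))
  ultimately show "(deriv ^^ i) g differentiable (at x)"
    by (rule higher_deriv_differentiable_cong[rotated])
qed

lemma Ck_on_SucI:
  assumes "open U" and D: "\<And>x. x \<in> U \<Longrightarrow> (f has_real_derivative f' x) (at x)"
    and "Ck_on n U f'"
  shows "Ck_on (Suc n) U f"
proof -
  have "Ck_on n U (deriv f)"
    by (rule Ck_on_cong[OF assms(1) _ assms(3)]) (rule DERIV_imp_deriv[symmetric, OF D])
  then show ?thesis using D real_differentiable_def by (auto simp: Ck_on_Suc)
qed

lemma Ck_on_const: "Ck_on n U (\<lambda>x. c)"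
  by (simp add: Ck_on_def)

lemma Ck_on_id: "Ck_on n U (\<lambda>x. x)"
  by (cases n) (simp_all add: Ck_on_Suc Ck_on_const Ck_on_0)

lemma Ck_on_add:
  assumes "open U"
  shows "Ck_on n U f \<Longrightarrow> Ck_on n U g \<Longrightarrow> Ck_on n U (\<lambda>x. f x + g x)"
proof (induction n arbitrary: f g)
  case 0 then show ?case by (auto simp: Ck_on_0 intro: differentiable_add)
next
  case (Suc n)
  then have d: "\<forall>x\<in>U. f differentiable (at x)" "\<forall>x\<in>U. g differentiable (at x)"
    and dd: "Ck_on n U (deriv f)" "Ck_on n U (deriv g)" by (auto simp: Ck_on_Suc)
  show ?case
  proof (rule Ck_on_SucI[OF assms _ Suc.IH[OF dd]])
    show "((\<lambda>x. f x + g x) has_real_derivative deriv f x + deriv g x) (at x)" if "x \<in> U" for x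
      using d that by (intro DERIV_add) (auto simp: DERIV_deriv_iff_real_differentiable)
  qed
qed

lemma Ck_on_mult:
  assumes "open U"
  shows "Ck_on n U f \<Longrightarrow> Ck_on n U g \<Longrightarrow> Ck_on n U (\<lambda>x. f x * g x)"
proof (induction n arbitrary: f g)
  case 0 then show ?case by (auto simp: Ck_on_0 intro: differentiable_mult)
next
  case (Suc n)
  then have d: "\<forall>x\<in>U. f differentiable (at x)" "\<forall>x\<in>U. g differentiable (at x)"
    and dd: "Ck_on n U (deriv f)" "Ck_on n U (deriv g)" by (auto simp: Ck_on_Suc)
  have fg: "Ck_on n U f" "Ck_on n U g" using Suc.prems Ck_on_mono[of n "Suc n"] by auto
  show ?case
  proof (rule Ck_on_SucI[OF assms])
    show "((\<lambda>x. f x * g x) has_real_derivative deriv f x * g x + deriv g x * f x) (at x)"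
      if "x \<in> U" for x
      using d that by (intro DERIV_mult) (auto simp: DERIV_deriv_iff_real_differentiable)
    show "Ck_on n U (\<lambda>x. deriv f x * g x + deriv g x * f x)"
      by (rule Ck_on_add[OF assms Suc.IH[OF dd(1) fg(2)] Suc.IH[OF dd(2) fg(1)]])
  qed
qed

lemma Ck_on_comp:
  assumes "open U" "open V" "k ` U \<subseteq> V"
  shows "Ck_on n V h \<Longrightarrow> Ck_on n U k \<Longrightarrow> Ck_on n U (\<lambda>x. h (k x))"
proof (induction n arbitrary: h)
  case 0
  then show ?case
    using assms(3) differentiable_chain_at[of k _ h] by (auto simp: Ck_on_0 o_def)
next
  case (Suc n)
  then have d: "\<forall>x\<in>V. h differentiable (at x)" "\<forall>x\<in>U. k differentiable (at x)"
    and dd: "Ck_on n V (deriv h)" "Ck_on n U (deriv k)" by (auto simp: Ck_on_Suc)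
  have k: "Ck_on n U k" using Suc.prems(2) Ck_on_mono[of n "Suc n"] by auto
  show ?case
  proof (rule Ck_on_SucI[OF assms(1)])
    show "((\<lambda>x. h (k x)) has_real_derivative deriv h (k x) * deriv k x) (at x)" if "x \<in> U" for x
      using d that assms(3) by (intro DERIV_chain2) (auto simp: DERIV_deriv_iff_real_differentiable)
    show "Ck_on n U (\<lambda>x. deriv h (k x) * deriv k x)"
      by (rule Ck_on_mult[OF assms(1) Suc.IH[OF dd(1) k] dd(2)])
  qed
qed

text \<open>A solution of an autonomous ODE \<open>\<phi>' = Q \<circ> \<phi>\<close> with smooth right-hand side is smooth;
  this yields smoothness of \<open>1/x\<close> and \<open>exp\<close>.\<close>
lemma Ck_on_ode:
  assumes "open U" "open V" "\<phi> ` U \<subseteq> V"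
    and D: "\<And>x. x \<in> U \<Longrightarrow> (\<phi> has_real_derivative Q (\<phi> x)) (at x)" and "\<And>n. Ck_on n V Q"
  shows "Ck_on n U \<phi>"
proof (induction n)
  case 0 then show ?case using D real_differentiable_def by (auto simp: Ck_on_0)
next
  case (Suc n)
  show ?case by (rule Ck_on_SucI[OF assms(1) D Ck_on_comp[OF assms(1-3) assms(5) Suc]])
qed

section \<open>Some smooth elementary functions\<close>

lemma Ck_on_inverse: "Ck_on n {0<..} (\<lambda>x. 1 / x)"
proof (rule Ck_on_ode[OF open_greaterThan open_UNIV subset_UNIV])
  show "((\<lambda>x. 1 / x) has_real_derivative - (1 / x * (1 / x))) (at x)" if "x \<in> {0<..}" for x :: real
    using that by (auto intro!: derivative_eq_intros simp: power2_eq_square field_simps)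
  have "Ck_on n UNIV (\<lambda>t. (-1) * (t * t))" for n
    by (intro Ck_on_mult Ck_on_const Ck_on_id open_UNIV)
  then show "Ck_on n UNIV (\<lambda>t. - (t * t))" for n
    by simp
qed

lemma Ck_on_exp: "Ck_on n UNIV exp"
  by (rule Ck_on_ode[OF open_UNIV open_UNIV subset_UNIV DERIV_exp Ck_on_id])

lemma Ck_on_ln: "Ck_on n {0<..} ln"
proof -
  have "Ck_on (Suc n) {0<..} ln"
    by (rule Ck_on_SucI[OF open_greaterThan _ Ck_on_inverse]) (simp add: DERIV_ln_divide)
  then show ?thesis by (rule Ck_on_mono[rotated]) simp
qed

definition sigmoid :: "real \<Rightarrow> real" where "sigmoid s = 1 / (1 + exp (- s))"
definition logit :: "real \<Rightarrow> real" where "logit y = ln y - ln (1 - y)"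

lemma sigmoid_bounds: "0 < sigmoid s" "sigmoid s < 1"
  by (auto simp: sigmoid_def add_pos_pos)

lemma sigmoid_logit: "0 < y \<Longrightarrow> y < 1 \<Longrightarrow> sigmoid (logit y) = y"
  by (simp add: sigmoid_def logit_def exp_minus exp_diff field_simps)

lemma Ck_on_sigmoid: "Ck_on n UNIV sigmoid"
proof -
  have denom: "Ck_on n UNIV (\<lambda>s. 1 + exp ((-1) * s))"
    by (intro Ck_on_add Ck_on_const Ck_on_comp[OF _ _ _ Ck_on_exp] Ck_on_mult Ck_on_id) auto
  have "Ck_on n UNIV (\<lambda>s. 1 / (1 + exp ((-1) * s)))"
    by (rule Ck_on_comp[OF _ _ _ Ck_on_inverse denom]) (auto simp: add_pos_pos)
  then show ?thesis unfolding sigmoid_def by simp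
qed

lemma Ck_on_logit: "Ck_on n {0<..<1} logit"
proof -
  have "Ck_on n {0<..<1} (\<lambda>y. 1 + (-1) * y)"
    by (intro Ck_on_add Ck_on_mult Ck_on_const Ck_on_id) auto
  then have "Ck_on n {0<..<1} (\<lambda>y. ln (1 + (-1) * y))"
    by (intro Ck_on_comp[OF _ _ _ Ck_on_ln]) auto
  then have "Ck_on n {0<..<1} (\<lambda>y. ln y + (-1) * ln (1 + (-1) * y))"
    by (intro Ck_on_add Ck_on_mult Ck_on_const Ck_on_subset[OF _ Ck_on_ln]) auto
  then show ?thesis unfolding logit_def by simp
qed

text \<open>The curve \<open>1/(1+s\<^sup>2)\<close> reaches the endpoint 1 at s = 0.\<close>
definition bump :: "real \<Rightarrow> real" where "bump s = 1 / (1 + s * s)"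

lemma bump_bounds: "0 \<le> bump s" "bump s \<le> 1"
  by (simp_all add: bump_def add_pos_nonneg)

lemma Ck_on_bump: "Ck_on n UNIV bump"
proof -
  have denom: "Ck_on n UNIV (\<lambda>s. 1 + s * s)"
    by (intro Ck_on_add Ck_on_mult Ck_on_const Ck_on_id) auto
  have "Ck_on n UNIV (\<lambda>s. 1 / (1 + s * s))"
    by (rule Ck_on_comp[OF _ _ _ Ck_on_inverse denom]) (auto simp: add_pos_nonneg)
  then show ?thesis unfolding bump_def .
qed

section \<open>Computing derivatives from limits of derivatives\<close>

text \<open>If H is continuous at a and its derivative K (near a) converges to L, then H'(a) = L.
  Both one-sided difference quotients are handled by l'Hopital's rule.\<close>
lemma DERIV_from_deriv_limit:
  fixes H K :: "real \<Rightarrow> real"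
  assumes cont: "isCont H a"
    and deriv: "eventually (\<lambda>x. (H has_real_derivative K x) (at x)) (at a)"
    and lim: "(K \<longlongrightarrow> L) (at a)"
  shows "(H has_real_derivative L) (at a)"
proof -
  have num: "((\<lambda>x. H x - H a) \<longlongrightarrow> 0) (at a)"
    using cont by (simp add: isCont_def LIM_zero)
  have den: "((\<lambda>x. x - a) \<longlongrightarrow> 0) (at a)"
    by (intro tendsto_eq_intros) auto
  have den_nz: "eventually (\<lambda>x. x - a \<noteq> 0) (at a)"
    using eventually_neq_at_within[of a a UNIV] by simp
  have one_nz: "eventually (\<lambda>x. (1::real) \<noteq> 0) (at a)"
    by simp
  have num_deriv: "eventually (\<lambda>x. ((\<lambda>x. H x - H a) has_real_derivative K x) (at x)) (at a)"
    using deriv by eventually_elim (drule DERIV_diff[OF _ DERIV_const], simp)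
  have den_deriv: "eventually (\<lambda>x. ((\<lambda>x. x - a) has_real_derivative 1) (at x)) (at a)"
    by (intro always_eventually allI) (rule DERIV_diff[OF DERIV_ident DERIV_const, simplified])
  have quot_lim: "((\<lambda>x. K x / 1) \<longlongrightarrow> L) (at a)"
    using lim by simp
  have "((\<lambda>x. (H x - H a) / (x - a)) \<longlongrightarrow> L) (at_left a) \<and>
      ((\<lambda>x. (H x - H a) / (x - a)) \<longlongrightarrow> L) (at_right a)"
    using num den den_nz one_nz num_deriv den_deriv quot_lim
    unfolding filterlim_at_split eventually_at_split
    by (auto intro: lhopital_left[where f'=K and g'="\<lambda>_. 1"] lhopital_right[where f'=K and g'="\<lambda>_. 1"])
  then have "((\<lambda>x. (H x - H a) / (x - a)) \<longlongrightarrow> L) (at a)"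
    by (simp add: filterlim_at_split)
  then show ?thesis by (simp add: has_field_derivative_iff)
qed

lemma higher_deriv_from_limits:
  fixes H :: "real \<Rightarrow> real" and l :: "nat \<Rightarrow> real"
  assumes diff: "\<And>n. eventually (\<lambda>x. (deriv ^^ n) H differentiable (at x)) (at a)"
    and lim: "\<And>n. ((deriv ^^ n) H \<longlongrightarrow> l n) (at a)"
    and val: "H a = l 0"
  shows "(deriv ^^ n) H a = l n \<and> ((deriv ^^ n) H has_real_derivative l (Suc n)) (at a)"
proof -
  have step: "((deriv ^^ n) H has_real_derivative l (Suc n)) (at a)"
    if "(deriv ^^ n) H a = l n" for n
  proof (rule DERIV_from_deriv_limit[where K="(deriv ^^ Suc n) H"])
    show "isCont ((deriv ^^ n) H) a" using lim[of n] that by (simp add: isCont_def)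
    show "eventually (\<lambda>x. ((deriv ^^ n) H has_real_derivative (deriv ^^ Suc n) H x) (at x)) (at a)"
      using diff[of n] by eventually_elim (simp add: DERIV_deriv_iff_real_differentiable)
  qed (rule lim)
  show ?thesis
  proof (induction n)
    case 0 then show ?case using step[of 0] val by simp
  next
    case (Suc n)
    then have "(deriv ^^ Suc n) H a = l (Suc n)" by (simp add: DERIV_imp_deriv)
    with step[of "Suc n"] show ?case by blast
  qed
qed

lemma isCont_tendsto_at:
  fixes h :: "real \<Rightarrow> real"
  assumes cont: "isCont h a" and "F \<noteq> bot" "F \<le> at a" and lim: "(h \<longlongrightarrow> v) F"
  shows "(h \<longlongrightarrow> v) (at a)"
proof -
  have "h a = v"
    using tendsto_unique[OF \<open>F \<noteq> bot\<close> tendsto_mono[OF \<open>F \<le> at a\<close> cont[unfolded isCont_def]] lim] .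
  then show ?thesis using cont by (simp add: isCont_def)
qed

section \<open>Structure functions of the unit interval\<close>

lemma curves_I_intro:
  "(\<And>n. Ck_on n UNIV c) \<Longrightarrow> (\<And>s. 0 \<le> c s \<and> c s \<le> 1) \<Longrightarrow> c \<in> curves_I"
  unfolding curves_I_def smooth_fun_iff_Ck_on by auto

lemma funs_I_comp_smooth: "g \<in> funs_I \<Longrightarrow> c \<in> curves_I \<Longrightarrow> smooth_fun (\<lambda>s. g (c s))"
  unfolding funs_I_def frol_funs_def by (simp add: o_def)

text \<open>Structure functions of I are smooth on the open interval: g = (g \<circ> sigmoid) \<circ> logit there.\<close>
lemma funs_I_interior:
  assumes g: "g \<in> funs_I" shows "Ck_on n {0<..<1} g"
proof -
  have "sigmoid \<in> curves_I"
    by (rule curves_I_intro[OF Ck_on_sigmoid]) (simp add: sigmoid_bounds less_imp_le)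
  then have "Ck_on n UNIV (\<lambda>s. g (sigmoid s))"
    using funs_I_comp_smooth[OF g] by (simp add: smooth_fun_iff_Ck_on)
  then have comp: "Ck_on n {0<..<1} (\<lambda>y. g (sigmoid (logit y)))"
    by (rule Ck_on_comp[OF open_greaterThanLessThan open_UNIV subset_UNIV _ Ck_on_logit])
  show ?thesis
    by (rule Ck_on_cong[OF open_greaterThanLessThan _ comp]) (simp add: sigmoid_logit)
qed

lemma funs_I_tendsto_via_curve:
  assumes g: "g \<in> funs_I" and c: "c \<in> curves_I"
    and r: "(r \<longlongrightarrow> s0) F" and inv: "eventually (\<lambda>t. c (r t) = t) F"
  shows "(g \<longlongrightarrow> g (c s0)) F"
proof -
  have "(deriv ^^ 0) (\<lambda>s. g (c s)) differentiable (at s0)"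
    using funs_I_comp_smooth[OF g c] unfolding smooth_fun_def by blast
  then have "isCont (\<lambda>s. g (c s)) s0"
    by (simp add: differentiable_imp_continuous_within)
  from isCont_tendsto_compose[OF this r]
  have "((\<lambda>t. g (c (r t))) \<longlongrightarrow> g (c s0)) F" .
  moreover have "eventually (\<lambda>t. g (c (r t)) = g t) F"
    using inv by eventually_elim simp
  ultimately show ?thesis by (rule Lim_transform_eventually)
qed

text \<open>Structure functions of I are continuous at the endpoints, seen through the curves
  \<open>1 - bump\<close> (near 0) and \<open>bump\<close> (near 1).\<close>
lemma funs_I_tendsto_0:
  assumes g: "g \<in> funs_I" shows "(g \<longlongrightarrow> g 0) (at_right 0)"
proof -
  have "Ck_on n UNIV (\<lambda>s. 1 + (-1) * bump s)" for n
    by (intro Ck_on_add Ck_on_mult Ck_on_const Ck_on_bump open_UNIV)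
  then have curve: "(\<lambda>s. 1 + (-1) * bump s) \<in> curves_I"
    using bump_bounds by (intro curves_I_intro) auto
  have "((\<lambda>t. sqrt (t / (1 - t))) \<longlongrightarrow> sqrt (0 / (1 - 0))) (at_right 0)"
    by (intro tendsto_intros) auto
  then have "((\<lambda>t. sqrt (t / (1 - t))) \<longlongrightarrow> 0) (at_right 0)" by simp
  moreover have "eventually (\<lambda>t. 1 + (-1) * bump (sqrt (t / (1 - t))) = t) (at_right (0::real))"
    using eventually_at_right_real[of 0 1, simplified]
  proof eventually_elim
    case (elim t)
    then have "sqrt (t / (1 - t)) * sqrt (t / (1 - t)) = t / (1 - t)" by simp
    with elim show ?case by (simp add: bump_def field_simps)
  qed
  ultimately have "(g \<longlongrightarrow> g (1 + (-1) * bump 0)) (at_right 0)"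
    by (rule funs_I_tendsto_via_curve[OF g curve])
  then show ?thesis by (simp add: bump_def)
qed

lemma funs_I_tendsto_1:
  assumes g: "g \<in> funs_I" shows "(g \<longlongrightarrow> g 1) (at_left 1)"
proof -
  have curve: "bump \<in> curves_I"
    using bump_bounds by (intro curves_I_intro Ck_on_bump) auto
  have "((\<lambda>t. sqrt ((1 - t) / t)) \<longlongrightarrow> sqrt ((1 - 1) / 1)) (at_left 1)"
    by (intro tendsto_intros) auto
  then have "((\<lambda>t. sqrt ((1 - t) / t)) \<longlongrightarrow> 0) (at_left 1)" by simp
  moreover have "eventually (\<lambda>t. bump (sqrt ((1 - t) / t)) = t) (at_left (1::real))"
    using eventually_at_left_real[of 0 1, simplified]
  proof eventually_elim
    case (elim t)
    then have "sqrt ((1 - t) / t) * sqrt ((1 - t) / t) = (1 - t) / t" by simp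
    with elim show ?case by (simp add: bump_def field_simps)
  qed
  ultimately have "(g \<longlongrightarrow> g (bump 0)) (at_left 1)"
    by (rule funs_I_tendsto_via_curve[OF g curve])
  then show ?thesis by (simp add: bump_def)
qed

section \<open>The clipping curve\<close>

definition clip :: "real \<Rightarrow> real" where "clip s = max 0 (min 1 s)"

lemma clip_below: "s \<le> 0 \<Longrightarrow> clip s = 0" and clip_above: "1 \<le> s \<Longrightarrow> clip s = 1"
  by (simp_all add: clip_def)

lemma clip_locally:
  fixes g :: "real \<Rightarrow> real"
  shows "s \<in> {0<..<1} \<Longrightarrow> eventually (\<lambda>x. g (clip x) = g x) (nhds s)"
    and "s < 0 \<Longrightarrow> eventually (\<lambda>x. g (clip x) = g 0) (nhds s)"
    and "s > 1 \<Longrightarrow> eventually (\<lambda>x. g (clip x) = g 1) (nhds s)"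
  using eventually_nhds_in_open[OF open_greaterThanLessThan[of 0 1], of s]
    eventually_nhds_in_open[OF open_lessThan[of 0], of s]
    eventually_nhds_in_open[OF open_greaterThan[of 1], of s]
  by (auto elim!: eventually_mono simp: clip_def)

lemma higher_deriv_clip:
  fixes g :: "real \<Rightarrow> real"
  shows "s \<in> {0<..<1} \<Longrightarrow> (deriv ^^ n) (\<lambda>x. g (clip x)) s = (deriv ^^ n) g s"
    and "s < 0 \<Longrightarrow> (deriv ^^ n) (\<lambda>x. g (clip x)) s = (if n = 0 then g 0 else 0)"
    and "s > 1 \<Longrightarrow> (deriv ^^ n) (\<lambda>x. g (clip x)) s = (if n = 0 then g 1 else 0)"
  using higher_deriv_cong_ev[OF clip_locally(1) refl] higher_deriv_cong_ev[OF clip_locally(2) refl]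
    higher_deriv_cong_ev[OF clip_locally(3) refl] by simp_all

lemma higher_deriv_const_differentiable: "(deriv ^^ n) (\<lambda>x::real. c) differentiable (at x)"
  by (cases "n = 0") simp_all

lemma funs_I_comp_clip_differentiable:
  assumes gI: "g \<in> funs_I" and x0: "x \<noteq> 0" and x1: "x \<noteq> 1"
  shows "(deriv ^^ n) (\<lambda>s. g (clip s)) differentiable (at x)"
proof -
  consider "x < 0" | "x \<in> {0<..<1}" | "x > 1"
    using x0 x1 by (metis greaterThanLessThan_iff linorder_neqE_linordered_idom)
  then obtain h where "eventually (\<lambda>y. h y = g (clip y)) (nhds x)"
    and "(deriv ^^ n) h differentiable (at x)"
  proof cases
    case 1
    from that[OF eventually_mono[OF clip_locally(2)[OF 1] sym] higher_deriv_const_differentiable]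
    show ?thesis .
  next
    case 2
    with funs_I_interior[OF gI, of n] have "(deriv ^^ n) g differentiable (at x)"
      by (simp add: Ck_on_def)
    from that[OF eventually_mono[OF clip_locally(1)[OF 2] sym] this] show ?thesis .
  next
    case 3
    from that[OF eventually_mono[OF clip_locally(3)[OF 3] sym] higher_deriv_const_differentiable]
    show ?thesis .
  qed
  then show ?thesis by (rule higher_deriv_differentiable_cong)
qed

text \<open>For g in the generating set, \<open>g \<circ> clip\<close> is smooth: away from 0 and 1 this is local,
  and at the endpoints every derivative has a limit from both sides (the value of g for order 0,
  and 0 otherwise), so \<open>higher_deriv_from_limits\<close> applies.\<close>
lemma flat_gen_comp_clip_smooth:
  assumes g: "g \<in> flat_gen"
  shows "smooth_fun (\<lambda>s. g (clip s))"
proof -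
  define G where "G = (\<lambda>s. g (clip s))"
  have gI: "g \<in> funs_I" using g by (simp add: flat_gen_def)
  have off: "(deriv ^^ n) G differentiable (at x)" if "x \<noteq> 0" "x \<noteq> 1" for n x
    unfolding G_def using funs_I_comp_clip_differentiable[OF gI that] .
  have near: "eventually (\<lambda>x. (deriv ^^ n) G differentiable (at x)) (at a)" for n a
    using eventually_neq_at_within[of 0 a UNIV] eventually_neq_at_within[of 1 a UNIV]
    by eventually_elim (rule off)
  have inside: "eventually (\<lambda>x. (deriv ^^ n) g x = (deriv ^^ n) G x) (at_right 0)"
    "eventually (\<lambda>x. (deriv ^^ n) g x = (deriv ^^ n) G x) (at_left 1)" for n
    using eventually_at_right_real[of 0 1, simplified] eventually_at_left_real[of 0 1, simplified]
    by (auto elim!: eventually_mono simp: G_def higher_deriv_clip)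
  have outside: "eventually (\<lambda>x. (deriv ^^ n) G x = (if n = 0 then g 0 else 0)) (at_left 0)"
    "eventually (\<lambda>x. (deriv ^^ n) G x = (if n = 0 then g 1 else 0)) (at_right 1)" for n
    using eventually_at_left_real[of "-1" 0, simplified] eventually_at_right_real[of 1 2, simplified]
    by (auto elim!: eventually_mono simp: G_def higher_deriv_clip clip_below clip_above)
  have lim0: "((deriv ^^ n) G \<longlongrightarrow> (if n = 0 then g 0 else 0)) (at 0)" for n
  proof -
    have "((deriv ^^ n) g \<longlongrightarrow> (if n = 0 then g 0 else 0)) (at_right 0)"
      using g funs_I_tendsto_0[OF gI] by (auto simp: flat_gen_def)
    from Lim_transform_eventually[OF this inside(1)] tendsto_eventually[OF outside(1)]
    show ?thesis by (simp add: filterlim_at_split)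
  qed
  have lim1: "((deriv ^^ n) G \<longlongrightarrow> (if n = 0 then g 1 else 0)) (at 1)" for n
  proof -
    have "((deriv ^^ n) g \<longlongrightarrow> (if n = 0 then g 1 else 0)) (at_left 1)"
      using g funs_I_tendsto_1[OF gI] by (auto simp: flat_gen_def)
    from Lim_transform_eventually[OF this inside(2)] tendsto_eventually[OF outside(2)]
    show ?thesis by (simp add: filterlim_at_split)
  qed
  have "G 0 = g 0" "G 1 = g 1" by (simp_all add: G_def clip_below clip_above)
  then have "(deriv ^^ n) G differentiable (at x)" for n x
    using higher_deriv_from_limits[OF near lim0, of n] higher_deriv_from_limits[OF near lim1, of n]
      off[of x n] real_differentiable_def by (cases "x = 0 \<or> x = 1") auto
  then show ?thesis unfolding smooth_fun_def G_def by simp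
qed

text \<open>Conversely, if \<open>f \<circ> clip\<close> is smooth then all derivatives of f of order \<open>\<ge> 1\<close> tend to 0
  at the endpoints: the derivatives of \<open>f \<circ> clip\<close> vanish outside [0,1], so by continuity
  they vanish at 0 and 1, and inside (0,1) they are those of f.\<close>
lemma flat_ends_of_comp_clip:
  assumes F: "smooth_fun (\<lambda>s. f (clip s))" and n: "n \<ge> 1"
  shows "((deriv ^^ n) f \<longlongrightarrow> 0) (at_right 0) \<and> ((deriv ^^ n) f \<longlongrightarrow> 0) (at_left 1)"
proof -
  define H where "H = (deriv ^^ n) (\<lambda>s. f (clip s))"
  have cont: "isCont H x" for x
    using F unfolding smooth_fun_def H_def by (blast intro: differentiable_imp_continuous_within)
  have left0: "eventually (\<lambda>x. H x = 0) (at_left 0)"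
    and right1: "eventually (\<lambda>x. H x = 0) (at_right 1)"
    using eventually_at_left_real[of "-1" 0, simplified] eventually_at_right_real[of 1 2, simplified] n
    by (auto elim!: eventually_mono simp: H_def higher_deriv_clip)
  have "(H \<longlongrightarrow> 0) (at 0)"
    by (rule isCont_tendsto_at[OF cont _ _ tendsto_eventually[OF left0]]) (simp_all add: at_le)
  moreover have "(H \<longlongrightarrow> 0) (at 1)"
    by (rule isCont_tendsto_at[OF cont _ _ tendsto_eventually[OF right1]]) (simp_all add: at_le)
  moreover have "eventually (\<lambda>x. H x = (deriv ^^ n) f x) (at_right 0)"
    "eventually (\<lambda>x. H x = (deriv ^^ n) f x) (at_left 1)"
    using eventually_at_right_real[of 0 1, simplified] eventually_at_left_real[of 0 1, simplified]
    by (auto elim!: eventually_mono simp: H_def higher_deriv_clip)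
  ultimately show ?thesis
    unfolding filterlim_at_split by (auto intro: Lim_transform_eventually)
qed

section \<open>Frolicher generalities and the main theorem\<close>

lemma gen_subset_frol_funs: "F0 \<subseteq> frol_funs (frol_curves X F0)"
  unfolding frol_funs_def frol_curves_def by blast

lemma frol_funs_antimono: "C \<subseteq> C' \<Longrightarrow> frol_funs C' \<subseteq> frol_funs C"
  unfolding frol_funs_def by blast

text \<open>Structure curves of I are structure curves of the flattened interval, since all
  generators are structure functions of I.\<close>
lemma curves_I_subset_flat: "curves_I \<subseteq> curves_flatI"
  unfolding curves_flatI_def frol_curves_def curves_I_def flat_gen_def funs_I_def frol_funs_def
  by auto

text \<open>The clipping map is a structure curve of the flattened interval (but not of I).\<close>
lemma clip_curve_flat: "clip \<in> curves_flatI"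
  unfolding curves_flatI_def frol_curves_def
  using flat_gen_comp_clip_smooth by (auto simp: clip_def o_def)

theorem mainTheorem1:
  shows "funs_flatI = {f \<in> funs_I. \<forall>n\<ge>1.
      ((deriv ^^ n) f \<longlongrightarrow> 0) (at_right 0) \<and> ((deriv ^^ n) f \<longlongrightarrow> 0) (at_left 1)}"
proof -
  have "funs_flatI \<subseteq> flat_gen"
  proof
    fix f assume f: "f \<in> funs_flatI"
    then have "f \<in> funs_I"
      using frol_funs_antimono[OF curves_I_subset_flat] by (auto simp: funs_I_def funs_flatI_def)
    moreover have "smooth_fun (\<lambda>s. f (clip s))"
      using f clip_curve_flat by (simp add: funs_flatI_def frol_funs_def o_def)
    ultimately show "f \<in> flat_gen"
      using flat_ends_of_comp_clip unfolding flat_gen_def by blast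
  qed
  moreover have "flat_gen \<subseteq> funs_flatI"
    unfolding funs_flatI_def curves_flatI_def by (rule gen_subset_frol_funs)
  ultimately show ?thesis by (simp add: flat_gen_def)
qed

end
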